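(* In the setup of the context, for all $x,y,z\in B$: (a) if $\gamma_{x,y,z}\neq0$, then $t_x\sim_{\mathcal L}t_y^\ast$, $t_y\sim_{\mathcal L}t_z^\ast$ and $t_z\sim_{\mathcal L}t_x^\ast$ (left cells of $J$ with respect to the basis $(t_w)$); (b) if $t_x\sim_{\mathcal L}t_y$ in $J$, then $x\sim_{\mathcal L}y$ in $H$ (left cells of $H$ with respect to $B$); hence the partition of $B$ into $J$-left cells refines the partition into $H$-left cells; (c) the analogous statements of (b) hold for right cells and two-sided cells; (d) $t_x\sim_{\mathcal{LR}}t_x^\ast$.
   Context: Cells: for a ring $A$ acting on a module $M$ (left, right, or two-sided) which is free over the base ring $k$ with basis $C$, write $c\leftarrow c'$ if there is $h$ in $A$ (resp. a product $hc'h'$ in the bimodule case) such that $c$ occurs with nonzero coefficient in the expansion of $hc'$ (resp. $c'h$, $hc'h'$) in the basis $C$; $\preceq$ is the transitive closure of $\leftarrow$, and cells are the classes of the equivalence relation $c\sim c'\iff c\preceq c'\preceq c$. $\sim_{\mathcal L}$, $\sim_{\mathcal R}$, $\sim_{\mathcal{LR}}$ refer to the regular left, right and bimodule. Setup: $\Gamma$ totally ordered abelian group; $K$ field with surjective valuation $\nu$, valuation ring $\mathcal O$, maximal ideal $\mathfrak m$, formally real residue field $F$; $H$ finite-dimensional split semisimple symmetric $K$-algebra with trace $\tau$, $K$-linear involutive antiautomorphism $\ast$, $\ast$-symmetric basis $B$ ($B^\ast=B$, $\tau(bc^\ast)=\delta_{bc}$). With Schur elements $c_\lambda$ ($\tau=\sum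 c_\lambda^{-1}\chi_\lambda$), $a_\lambda=-\tfrac12\nu(c_\lambda)\in\Gamma$, a homomorphism $\gamma\mapsto v^\gamma$ on $\langle a_\lambda\rangle$ with $\nu(v^\gamma)=\gamma$, $f_\lambda=v^{2a_\lambda}c_\lambda$, balanced representations $\rho_\lambda$ (irreducible of type $\lambda$, $\nu(\rho_\lambda(b))\ge-a_\lambda$ for $b$ in every $\ast$-symmetric basis) and $c^\lambda(x)=v^{a_\lambda}\rho_\lambda(x)\bmod\mathfrak m$, set $\gamma_{x,y,z}=\sum_\lambda\sum_{\mathfrak{s,t,u}}f_\lambda^{-1}c^\lambda(x)_{\mathfrak{st}}c^\lambda(y)_{\mathfrak{tu}}c^\lambda(z)_{\mathfrak{us}}\in F$. $J$ is the $F$-algebra with basis $(t_x)_{x\in B}$ and product $t_xt_y=\sum_z\gamma_{x,y,z}t_{z^\ast}$, with $t_x^\ast:=t_{x^\ast}$. *)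

theory Defs
  imports Main
begin

text \<open>An algebra with finite basis indexed by the finite type 'b is represented by its
structure constants m: the product of basis elements b, c is the sum over d of m b c d times d.
Elements are coefficient vectors 'b => 'a.\<close>

definition sprod :: "('b::finite \<Rightarrow> 'b \<Rightarrow> 'b \<Rightarrow> 'a::comm_ring_1) \<Rightarrow> ('b \<Rightarrow> 'a) \<Rightarrow> ('b \<Rightarrow> 'a) \<Rightarrow> 'b \<Rightarrow> 'a" where
  "sprod m u v e = (\<Sum>b\<in>UNIV. \<Sum>c\<in>UNIV. u b * v c * m b c e)"

definition bvec :: "'b \<Rightarrow> 'b \<Rightarrow> 'a::comm_ring_1" where
  "bvec c = (\<lambda>e. if e = c then 1 else 0)"

text \<open>Elementary cell relations: c <- c' if c occurs with nonzero coefficient in h c'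
(left), c' h (right), h c' h' (two-sided), for some elements h, h' of the algebra.\<close>

definition left_step :: "('b::finite \<Rightarrow> 'b \<Rightarrow> 'b \<Rightarrow> 'a::comm_ring_1) \<Rightarrow> 'b \<Rightarrow> 'b \<Rightarrow> bool" where
  "left_step m c c' \<longleftrightarrow> (\<exists>h. sprod m h (bvec c') c \<noteq> 0)"

definition right_step :: "('b::finite \<Rightarrow> 'b \<Rightarrow> 'b \<Rightarrow> 'a::comm_ring_1) \<Rightarrow> 'b \<Rightarrow> 'b \<Rightarrow> bool" where
  "right_step m c c' \<longleftrightarrow> (\<exists>h. sprod m (bvec c') h c \<noteq> 0)"

definition lr_step :: "('b::finite \<Rightarrow> 'b \<Rightarrow> 'b \<Rightarrow> 'a::comm_ring_1) \<Rightarrow> 'b \<Rightarrow> 'b \<Rightarrow> bool" where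
  "lr_step m c c' \<longleftrightarrow> (\<exists>h h'. sprod m (sprod m h (bvec c')) h' c \<noteq> 0)"

definition cell_equiv :: "('b \<Rightarrow> 'b \<Rightarrow> bool) \<Rightarrow> 'b \<Rightarrow> 'b \<Rightarrow> bool" where
  "cell_equiv R c c' \<longleftrightarrow> R\<^sup>+\<^sup>+ c c' \<and> R\<^sup>+\<^sup>+ c' c"

definition left_cell_equiv where "left_cell_equiv m = cell_equiv (left_step m)"
definition right_cell_equiv where "right_cell_equiv m = cell_equiv (right_step m)"
definition lr_cell_equiv where "lr_cell_equiv m = cell_equiv (lr_step m)"

definition is_assoc_unital :: "('b::finite \<Rightarrow> 'b \<Rightarrow> 'b \<Rightarrow> 'a::comm_ring_1) \<Rightarrow> bool" where
  "is_assoc_unital m \<longleftrightarrow>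
     (\<forall>u v w. sprod m (sprod m u v) w = sprod m u (sprod m v w)) \<and>
     (\<exists>e. \<forall>u. sprod m e u = u \<and> sprod m u e = u)"

definition valuation :: "('k::field \<Rightarrow> 'g::linordered_ab_group_add) \<Rightarrow> bool" where
  "valuation \<nu> \<longleftrightarrow>
     (\<forall>x y. x \<noteq> 0 \<longrightarrow> y \<noteq> 0 \<longrightarrow> \<nu> (x * y) = \<nu> x + \<nu> y) \<and>
     (\<forall>x y. x \<noteq> 0 \<longrightarrow> y \<noteq> 0 \<longrightarrow> x + y \<noteq> 0 \<longrightarrow> min (\<nu> x) (\<nu> y) \<le> \<nu> (x + y)) \<and>
     (\<forall>g. \<exists>x. x \<noteq> 0 \<and> \<nu> x = g)"

definition val_ring :: "('k::field \<Rightarrow> 'g::linordered_ab_group_add) \<Rightarrow> 'k set" where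
  "val_ring \<nu> = {x. x = 0 \<or> 0 \<le> \<nu> x}"

definition max_ideal :: "('k::field \<Rightarrow> 'g::linordered_ab_group_add) \<Rightarrow> 'k set" where
  "max_ideal \<nu> = {x. x = 0 \<or> 0 < \<nu> x}"

text \<open>pi is the reduction map O -> F = O/m: a surjective ring homomorphism on O with kernel m
(its values outside O are irrelevant).\<close>

definition residue_map :: "('k::field \<Rightarrow> 'g::linordered_ab_group_add) \<Rightarrow> ('k \<Rightarrow> 'f::field) \<Rightarrow> bool" where
  "residue_map \<nu> \<pi> \<longleftrightarrow>
     (\<forall>x\<in>val_ring \<nu>. \<forall>y\<in>val_ring \<nu>. \<pi> (x + y) = \<pi> x + \<pi> y \<and> \<pi> (x * y) = \<pi> x * \<pi> y) \<and>
     \<pi> 1 = 1 \<and> \<pi> ` val_ring \<nu> = UNIV \<and>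
     (\<forall>x\<in>val_ring \<nu>. \<pi> x = 0 \<longleftrightarrow> x \<in> max_ideal \<nu>)"

definition formally_real :: "'f::field itself \<Rightarrow> bool" where
  "formally_real _ \<longleftrightarrow> \<not> (\<exists>xs::'f list. sum_list (map (\<lambda>x. x * x) xs) = - 1)"

inductive_set gen_subgroup :: "'g::ab_group_add set \<Rightarrow> 'g set" for S where
  gen_zero: "0 \<in> gen_subgroup S"
| gen_base: "x \<in> S \<Longrightarrow> x \<in> gen_subgroup S"
| gen_diff: "x \<in> gen_subgroup S \<Longrightarrow> y \<in> gen_subgroup S \<Longrightarrow> x - y \<in> gen_subgroup S"

definition starH :: "('b \<Rightarrow> 'b) \<Rightarrow> ('b \<Rightarrow> 'k) \<Rightarrow> 'b \<Rightarrow> 'k" where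
  "starH st h = (\<lambda>b. h (st b))"

definition tauH :: "('b::finite \<Rightarrow> 'k::comm_ring_1) \<Rightarrow> ('b \<Rightarrow> 'k) \<Rightarrow> 'k" where
  "tauH tau h = (\<Sum>b\<in>UNIV. h b * tau b)"

definition is_basis :: "('b::finite \<Rightarrow> 'k::field) set \<Rightarrow> bool" where
  "is_basis S \<longleftrightarrow> finite S \<and>
     (\<forall>h. \<exists>!co. (\<forall>s. s \<notin> S \<longrightarrow> co s = 0) \<and> (\<forall>b. h b = (\<Sum>s\<in>S. co s * s b)))"

definition star_sym_basis ::
  "('b::finite \<Rightarrow> 'b \<Rightarrow> 'b \<Rightarrow> 'k::field) \<Rightarrow> ('b \<Rightarrow> 'k) \<Rightarrow> ('b \<Rightarrow> 'b) \<Rightarrow> ('b \<Rightarrow> 'k) set \<Rightarrow> bool" where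
  "star_sym_basis m tau st S \<longleftrightarrow> is_basis S \<and> starH st ` S = S \<and>
     (\<forall>s\<in>S. \<forall>t\<in>S. tauH tau (sprod m s (starH st t)) = (if s = t then 1 else 0))"

definition repv :: "('b::finite \<Rightarrow> nat \<Rightarrow> nat \<Rightarrow> 'k::comm_ring_1) \<Rightarrow> ('b \<Rightarrow> 'k) \<Rightarrow> nat \<Rightarrow> nat \<Rightarrow> 'k" where
  "repv r h i j = (\<Sum>b\<in>UNIV. h b * r b i j)"

definition is_rep :: "('b::finite \<Rightarrow> 'b \<Rightarrow> 'b \<Rightarrow> 'k::comm_ring_1) \<Rightarrow> nat \<Rightarrow> ('b \<Rightarrow> nat \<Rightarrow> nat \<Rightarrow> 'k) \<Rightarrow> bool" where
  "is_rep m n r \<longleftrightarrow> (\<forall>u v i j. i < n \<longrightarrow> j < n \<longrightarrow>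
      repv r (sprod m u v) i j = (\<Sum>k<n. repv r u i k * repv r v k j))"

text \<open>Together with is_rep for every l this says that H is split
semisimple and (rho l)_l is a complete set of pairwise non-isomorphic (absolutely)
irreducible representations.\<close>
definition wedderburn ::
  "('l::finite \<Rightarrow> nat) \<Rightarrow> ('l \<Rightarrow> 'b::finite \<Rightarrow> nat \<Rightarrow> nat \<Rightarrow> 'k::comm_ring_1) \<Rightarrow> bool" where
  "wedderburn d rho \<longleftrightarrow> (\<forall>l. 0 < d l) \<and>
     (\<forall>M. \<exists>!h. \<forall>l i j. i < d l \<longrightarrow> j < d l \<longrightarrow> repv (rho l) h i j = M l i j)"

definition gammaJ ::
  "('g::linordered_ab_group_add \<Rightarrow> 'k::field) \<Rightarrow> ('k \<Rightarrow> 'f::field) \<Rightarrow> ('l::finite \<Rightarrow> 'g)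
   \<Rightarrow> ('l \<Rightarrow> 'k) \<Rightarrow> ('l \<Rightarrow> nat) \<Rightarrow> ('l \<Rightarrow> 'b \<Rightarrow> nat \<Rightarrow> nat \<Rightarrow> 'k) \<Rightarrow> 'b \<Rightarrow> 'b \<Rightarrow> 'b \<Rightarrow> 'f" where
  "gammaJ vp \<pi> a c d rho x y z =
     (\<Sum>l\<in>UNIV.
        let f = \<pi> (vp (a l + a l) * c l);
            cl = (\<lambda>w i j. \<pi> (vp (a l) * rho l w i j))
        in (\<Sum>s<d l. \<Sum>t<d l. \<Sum>u<d l. inverse f * cl x s t * cl y t u * cl z u s))"

text \<open>Structure constants of J w.r.t. the basis (t_w): t_x t_y = sum_z gamma x y z t_{z*},
so the coefficient of t_w in t_x t_y is gamma x y (w*).\<close>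
definition multJ ::
  "('g::linordered_ab_group_add \<Rightarrow> 'k::field) \<Rightarrow> ('k \<Rightarrow> 'f::field) \<Rightarrow> ('l::finite \<Rightarrow> 'g)
   \<Rightarrow> ('l \<Rightarrow> 'k) \<Rightarrow> ('l \<Rightarrow> nat) \<Rightarrow> ('l \<Rightarrow> 'b \<Rightarrow> nat \<Rightarrow> nat \<Rightarrow> 'k) \<Rightarrow> ('b \<Rightarrow> 'b)
   \<Rightarrow> 'b \<Rightarrow> 'b \<Rightarrow> 'b \<Rightarrow> 'f" where
  "multJ vp \<pi> a c d rho st x y w = gammaJ vp \<pi> a c d rho x y (st w)"

end

theory Submission
  imports Defs
begin

text \<open>
  Through the representations rho_l, H is a product of full matrix algebras, and Fourier inversion
  h(x) = sum_l c_l^-1 tr(rho_l(h) rho_l(x*)) turns each elementary cell relation of H into the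
  nonvanishing of some entry of a product of the matrices rho_l(b). Since the balanced matrices
  v^(a_l) rho_l(b) are integral and the normalised Schur elements f_l are units, the orthogonality
  relations of the rho_l survive reduction modulo the maximal ideal; hence J is an algebra of the same
  kind with the matrices c^l(b), and an entry of a product of c^l's is the residue of the corresponding
  entry for the rho_l's. So every relation in J implies the one in H, which gives (b) and (c), and (d)
  follows from completeness: c^l(x) and c^l(x*) are nonzero in a common block l.

  For (a), gamma_{x,y,z} is the residue of tau(xyz w) for the central element w acting on the l-th
  simple module by v^(a_l). The involution permutes the simple components and preserves a_l, so
  w* = w, and the trace property of tau yields gamma_{x,y,z} = gamma_{y,z,x} = gamma_{y*,x*,z*}.
  A nonzero gamma_{x,y,z} therefore gives left steps from t_x to t_{y*} and back.
\<close>

lemma if_zero_mult [simp]: "(if P then a else 0) * b = (if P then a * b else (0::'a::mult_zero))"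
  by simp

lemma mult_if_zero [simp]: "b * (if P then a else 0) = (if P then b * a else (0::'a::mult_zero))"
  by simp

lemma if_conj_zero: "(if P \<and> Q then a else 0) = (if P then if Q then a else 0 else (0::'a::zero))"
  by simp

lemma sum_if_zero: "(\<Sum>x\<in>A. if P then g x else 0) = (if P then sum g A else (0::'a::comm_monoid_add))"
  by simp

lemma sum_matrix_mult_assoc:
  "(\<Sum>j\<in>J. (\<Sum>k\<in>K. (a k::'a::comm_semiring_0) * b k j) * c j) = (\<Sum>k\<in>K. a k * (\<Sum>j\<in>J. b k j * c j))"
  by (simp add: sum_distrib_left sum_distrib_right mult.assoc sum.swap[of _ J])

lemma sum_trace3_rotate:
  "(\<Sum>i\<in>I. \<Sum>j\<in>J. (\<Sum>k\<in>K. (a i k::'a::comm_semiring_0) * b k j) * c j i)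
     = (\<Sum>k\<in>K. \<Sum>j\<in>J. b k j * (\<Sum>i\<in>I. a i k * c j i))"
proof -
  have "(\<Sum>i\<in>I. \<Sum>j\<in>J. (\<Sum>k\<in>K. a i k * b k j) * c j i) = (\<Sum>i\<in>I. \<Sum>j\<in>J. \<Sum>k\<in>K. b k j * (a i k * c j i))"
    by (simp add: sum_distrib_right sum_distrib_left mult_ac)
  also have "\<dots> = (\<Sum>j\<in>J. \<Sum>k\<in>K. \<Sum>i\<in>I. b k j * (a i k * c j i))"
    by (subst sum.swap) (simp add: sum.swap[of _ I])
  also have "\<dots> = (\<Sum>k\<in>K. \<Sum>j\<in>J. b k j * (\<Sum>i\<in>I. a i k * c j i))"
    by (subst sum.swap) (simp add: sum_distrib_left)
  finally show ?thesis .
qed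

lemma sum_rotate3:
  "(\<Sum>s\<in>S. \<Sum>t\<in>T. \<Sum>u\<in>U t. F s t u) = (\<Sum>t\<in>T. \<Sum>u\<in>U t. \<Sum>s\<in>S. (F s t u :: 'a::comm_monoid_add))"
  by (subst sum.swap) (rule sum.cong[OF refl], rule sum.swap)

lemma sum_swap_inside3:
  "(\<Sum>w\<in>W. \<Sum>l\<in>L. \<Sum>i\<in>I l. \<Sum>j\<in>J l. F w l i j)
     = (\<Sum>l\<in>L. \<Sum>i\<in>I l. \<Sum>j\<in>J l. \<Sum>w\<in>W. (F w l i j :: 'a::comm_monoid_add))"
  by (subst sum.swap) (rule sum.cong[OF refl], subst sum.swap, rule sum.cong[OF refl], rule sum.swap)

lemma sum_swap_inside4:
  "(\<Sum>w\<in>W. \<Sum>l\<in>L. \<Sum>i\<in>I l. \<Sum>j\<in>J l. \<Sum>k\<in>K l. F w l i j k)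
     = (\<Sum>l\<in>L. \<Sum>i\<in>I l. \<Sum>j\<in>J l. \<Sum>k\<in>K l. \<Sum>w\<in>W. (F w l i j k :: 'a::comm_monoid_add))"
  by (subst sum.swap) (rule sum.cong[OF refl], subst sum_swap_inside3, rule refl)

lemma sum_involution_reindex:
  assumes "\<And>b. \<sigma> (\<sigma> b) = b"
  shows "(\<Sum>b\<in>UNIV. g (\<sigma> b)) = (\<Sum>b\<in>(UNIV::'b::finite set). (g b :: 'a::comm_monoid_add))"
  by (rule sum.reindex_bij_betw) (metis assms bij_betw_def inj_on_inverseI surj_def)

lemma add_self_cancel: "(x::'g::linordered_ab_group_add) + x = y + y \<Longrightarrow> x = y"
  by (metis add.commute add_le_cancel_left nle_le)

lemma repv_bvec [simp]: "repv r (bvec b) i j = r b i j"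
  unfolding repv_def bvec_def by simp

lemma sprod_bvec_bvec [simp]: "sprod m (bvec b) (bvec c) e = m b c e"
  unfolding sprod_def bvec_def by simp

lemma bvec_inject: "bvec b = (bvec b' :: 'b \<Rightarrow> 'a::comm_ring_1) \<longleftrightarrow> b = b'"
  by (metis bvec_def one_neq_zero)

lemma repv_sum: "repv r (\<lambda>b. \<Sum>x\<in>I. F x b) p q = (\<Sum>x\<in>I. repv r (F x) p q)"
  unfolding repv_def by (simp add: sum_distrib_right) (rule sum.swap)

lemma repv_scale: "repv r (\<lambda>b. k * F b) p q = k * repv r F p q"
  unfolding repv_def by (simp add: sum_distrib_left mult_ac)

lemma repv_zero [simp]: "repv r (\<lambda>b. 0) p q = 0"
  unfolding repv_def by simp

lemma repv_sprod_of_basis: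
  fixes M :: "'b::finite \<Rightarrow> 'b \<Rightarrow> 'b \<Rightarrow> 'a::comm_ring_1"
  assumes basis: "\<And>x y. (\<Sum>w\<in>UNIV. M x y w * r w i j) = (\<Sum>k\<in>K. r x i k * r y k j)"
  shows "repv r (sprod M u v) i j = (\<Sum>k\<in>K. repv r u i k * repv r v k j)"
proof -
  have "repv r (sprod M u v) i j = (\<Sum>w\<in>UNIV. \<Sum>x\<in>UNIV. \<Sum>y\<in>UNIV. u x * v y * (M x y w * r w i j))"
    unfolding repv_def sprod_def by (simp add: sum_distrib_right sum_distrib_left mult_ac)
  also have "\<dots> = (\<Sum>x\<in>UNIV. \<Sum>y\<in>UNIV. u x * v y * (\<Sum>k\<in>K. r x i k * r y k j))"
    by (simp add: sum_rotate3 sum_distrib_left[symmetric] basis)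
  also have "\<dots> = (\<Sum>k\<in>K. \<Sum>x\<in>UNIV. \<Sum>y\<in>UNIV. (u x * r x i k) * (v y * r y k j))"
    by (simp add: sum_distrib_left mult_ac sum_rotate3[where S=K and T=UNIV and U="\<lambda>_. UNIV", symmetric])
  also have "\<dots> = (\<Sum>k\<in>K. repv r u i k * repv r v k j)"
    unfolding repv_def by (simp add: sum_product)
  finally show ?thesis .
qed

lemma tranclp_mono_rel: "R\<^sup>+\<^sup>+ x y \<Longrightarrow> (\<And>a b. R a b \<Longrightarrow> S a b) \<Longrightarrow> S\<^sup>+\<^sup>+ x y"
  by (induction rule: tranclp_induct) (auto intro: tranclp.trancl_into_trancl)

lemma cell_equiv_mono: "cell_equiv R x y \<Longrightarrow> (\<And>a b. R a b \<Longrightarrow> S a b) \<Longrightarrow> cell_equiv S x y"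
  unfolding cell_equiv_def using tranclp_mono_rel by metis

lemma cell_equiv_of_steps: "R x y \<Longrightarrow> R y x \<Longrightarrow> cell_equiv R x y"
  unfolding cell_equiv_def by auto

lemma inj_bvec: "inj (bvec :: 'b \<Rightarrow> 'b \<Rightarrow> 'a::comm_ring_1)"
  by (auto simp: inj_def bvec_inject)

lemma sum_range_bvec: "(\<Sum>s\<in>range bvec. g s * s b) = (g (bvec (b::'b::finite)) :: 'a::field)"
proof -
  have "bvec b' b = (if b' = b then 1 else (0::'a))" for b'
    by (auto simp: bvec_def)
  then show ?thesis by (simp add: sum.reindex[OF inj_bvec])
qed

lemma is_basis_range_bvec: "is_basis (range (bvec :: 'b::finite \<Rightarrow> 'b \<Rightarrow> 'a::field))"
  unfolding is_basis_def
proof (intro conjI allI)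
  fix h :: "'b \<Rightarrow> 'a"
  define co where "co s = (if s \<in> range bvec then h (inv bvec s) else 0)" for s :: "'b \<Rightarrow> 'a"
  show "\<exists>!co. (\<forall>s. s \<notin> range bvec \<longrightarrow> co s = 0) \<and> (\<forall>b. h b = (\<Sum>s\<in>range bvec. co s * s b))"
  proof (rule ex1I[of _ co])
    fix co' assume co': "(\<forall>s. s \<notin> range bvec \<longrightarrow> co' s = 0) \<and> (\<forall>b. h b = (\<Sum>s\<in>range bvec. co' s * s b))"
    show "co' = co"
    proof
      fix s show "co' s = co s"
        using co' by (cases "s \<in> range bvec") (auto simp: sum_range_bvec co_def inj_bvec)
    qed
  qed (auto simp: sum_range_bvec co_def inj_bvec)
qed simp

section \<open>Split semisimple algebras\<close>

text \<open>Both H and J are instances; here the elementary relations defining cells become conditions on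
the representing matrices.\<close>

locale split_semisimple =
  fixes M :: "'b::finite \<Rightarrow> 'b \<Rightarrow> 'b \<Rightarrow> 'a::field"
    and d :: "'l::finite \<Rightarrow> nat"
    and rep :: "'l \<Rightarrow> 'b \<Rightarrow> nat \<Rightarrow> nat \<Rightarrow> 'a"
    and unit :: "'l \<Rightarrow> nat \<Rightarrow> nat \<Rightarrow> 'b \<Rightarrow> 'a"
    and wt :: "'l \<Rightarrow> 'a"
    and st :: "'b \<Rightarrow> 'b"
  assumes repv_mult: "i < d l \<Longrightarrow> j < d l \<Longrightarrow>
      repv (rep l) (sprod M u v) i j = (\<Sum>k<d l. repv (rep l) u i k * repv (rep l) v k j)"
    and repv_unit: "i < d l \<Longrightarrow> j < d l \<Longrightarrow> p < d l' \<Longrightarrow> q < d l' \<Longrightarrow>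
      repv (rep l') (unit l i j) p q = (if l' = l \<and> p = i \<and> q = j then 1 else 0)"
    and fourier_inversion:
      "u x = (\<Sum>l\<in>UNIV. wt l * (\<Sum>i<d l. \<Sum>j<d l. repv (rep l) u i j * rep l (st x) j i))"
    and weight_nonzero: "wt l \<noteq> 0"
begin

lemma repv_unit_mult:
  assumes "i < d l" "k < d l" "p < d l'" "q < d l'"
  shows "repv (rep l') (sprod M (unit l i k) v) p q = (if l' = l \<and> p = i then repv (rep l) v k q else 0)"
  using assms by (simp add: repv_mult repv_unit if_conj_zero sum_if_zero cong: if_cong)

lemma repv_mult_unit:
  assumes "k < d l" "j < d l" "p < d l'" "q < d l'"
  shows "repv (rep l') (sprod M v (unit l k j)) p q = (if l' = l \<and> q = j then repv (rep l) v p k else 0)"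
  using assms by (auto simp: repv_mult repv_unit if_conj_zero sum_if_zero)

lemma fourier_inversion_unit:
  assumes "\<And>l' p q. p < d l' \<Longrightarrow> q < d l' \<Longrightarrow> repv (rep l') h p q = (if l' = l then g p q else 0)"
  shows "h x = wt l * (\<Sum>p<d l. \<Sum>q<d l. g p q * rep l (st x) q p)"
proof -
  have "h x = (\<Sum>l'\<in>UNIV. if l' = l then wt l * (\<Sum>p<d l. \<Sum>q<d l. g p q * rep l (st x) q p) else 0)"
    using assms by (subst fourier_inversion) (intro sum.cong refl, auto)
  then show ?thesis by simp
qed

lemma left_step_iff:
  "left_step M x y \<longleftrightarrow> (\<exists>l k i. k < d l \<and> i < d l \<and> (\<Sum>j<d l. rep l y k j * rep l (st x) j i) \<noteq> 0)"
proof
  assume "left_step M x y"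
  then obtain h where h: "sprod M h (bvec y) x \<noteq> 0" unfolding left_step_def by blast
  show "\<exists>l k i. k < d l \<and> i < d l \<and> (\<Sum>j<d l. rep l y k j * rep l (st x) j i) \<noteq> 0"
  proof (rule ccontr)
    assume none: "\<not> ?thesis"
    have "sprod M h (bvec y) x = (\<Sum>l\<in>UNIV. wt l *
        (\<Sum>i<d l. \<Sum>j<d l. (\<Sum>k<d l. repv (rep l) h i k * rep l y k j) * rep l (st x) j i))"
      by (subst fourier_inversion) (simp add: repv_mult)
    also have "\<dots> = (\<Sum>l\<in>UNIV. wt l *
        (\<Sum>i<d l. \<Sum>k<d l. repv (rep l) h i k * (\<Sum>j<d l. rep l y k j * rep l (st x) j i)))"
      by (simp only: sum_matrix_mult_assoc)
    also have "\<dots> = 0" using none by (auto intro!: sum.neutral)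
    finally show False using h by simp
  qed
next
  assume "\<exists>l k i. k < d l \<and> i < d l \<and> (\<Sum>j<d l. rep l y k j * rep l (st x) j i) \<noteq> 0"
  then obtain l k i where lki: "k < d l" "i < d l" "(\<Sum>j<d l. rep l y k j * rep l (st x) j i) \<noteq> 0"
    by blast
  have "sprod M (unit l i k) (bvec y) x = wt l * (\<Sum>p<d l. \<Sum>q<d l. (if p = i then rep l y k q else 0) * rep l (st x) q p)"
    using lki by (intro fourier_inversion_unit) (simp add: repv_unit_mult)
  also have "\<dots> = wt l * (\<Sum>q<d l. rep l y k q * rep l (st x) q i)"
    using lki by (simp add: sum_if_zero)
  finally have "sprod M (unit l i k) (bvec y) x \<noteq> 0" using lki weight_nonzero by simp
  then show "left_step M x y" unfolding left_step_def by blast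
qed

lemma right_step_iff:
  "right_step M x y \<longleftrightarrow> (\<exists>l k j. k < d l \<and> j < d l \<and> (\<Sum>i<d l. rep l y i k * rep l (st x) j i) \<noteq> 0)"
proof
  assume "right_step M x y"
  then obtain h where h: "sprod M (bvec y) h x \<noteq> 0" unfolding right_step_def by blast
  show "\<exists>l k j. k < d l \<and> j < d l \<and> (\<Sum>i<d l. rep l y i k * rep l (st x) j i) \<noteq> 0"
  proof (rule ccontr)
    assume none: "\<not> ?thesis"
    have "sprod M (bvec y) h x = (\<Sum>l\<in>UNIV. wt l *
        (\<Sum>i<d l. \<Sum>j<d l. (\<Sum>k<d l. rep l y i k * repv (rep l) h k j) * rep l (st x) j i))"
      by (subst fourier_inversion) (simp add: repv_mult)
    also have "\<dots> = (\<Sum>l\<in>UNIV. wt l *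
        (\<Sum>k<d l. \<Sum>j<d l. repv (rep l) h k j * (\<Sum>i<d l. rep l y i k * rep l (st x) j i)))"
      by (simp only: sum_trace3_rotate)
    also have "\<dots> = 0" using none by (auto intro!: sum.neutral)
    finally show False using h by simp
  qed
next
  assume "\<exists>l k j. k < d l \<and> j < d l \<and> (\<Sum>i<d l. rep l y i k * rep l (st x) j i) \<noteq> 0"
  then obtain l k j where lkj: "k < d l" "j < d l" "(\<Sum>i<d l. rep l y i k * rep l (st x) j i) \<noteq> 0"
    by blast
  have "sprod M (bvec y) (unit l k j) x = wt l * (\<Sum>p<d l. \<Sum>q<d l. (if q = j then rep l y p k else 0) * rep l (st x) q p)"
    using lkj by (intro fourier_inversion_unit) (simp add: repv_mult_unit)
  also have "\<dots> = wt l * (\<Sum>p<d l. rep l y p k * rep l (st x) j p)"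
    using lkj by (simp add: sum_if_zero)
  finally have "sprod M (bvec y) (unit l k j) x \<noteq> 0" using lkj weight_nonzero by simp
  then show "right_step M x y" unfolding right_step_def by blast
qed

lemma lr_step_iff:
  "lr_step M x y \<longleftrightarrow>
     (\<exists>l r k j i. r < d l \<and> k < d l \<and> j < d l \<and> i < d l \<and> rep l y r k \<noteq> 0 \<and> rep l (st x) j i \<noteq> 0)"
proof
  assume "lr_step M x y"
  then obtain h h' where h: "sprod M (sprod M h (bvec y)) h' x \<noteq> 0" unfolding lr_step_def by blast
  show "\<exists>l r k j i. r < d l \<and> k < d l \<and> j < d l \<and> i < d l \<and> rep l y r k \<noteq> 0 \<and> rep l (st x) j i \<noteq> 0"
  proof (rule ccontr)
    assume none: "\<not> ?thesis"
    have "sprod M (sprod M h (bvec y)) h' x = (\<Sum>l\<in>UNIV. wt l * (\<Sum>i<d l. \<Sum>j<d l.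
        (\<Sum>k<d l. (\<Sum>r<d l. repv (rep l) h i r * rep l y r k) * repv (rep l) h' k j) * rep l (st x) j i))"
      by (subst fourier_inversion) (simp add: repv_mult)
    also have "\<dots> = 0"
    proof (intro sum.neutral ballI)
      fix l
      show "wt l * (\<Sum>i<d l. \<Sum>j<d l. (\<Sum>k<d l. (\<Sum>r<d l. repv (rep l) h i r * rep l y r k)
          * repv (rep l) h' k j) * rep l (st x) j i) = 0"
      proof (cases "\<forall>r<d l. \<forall>k<d l. rep l y r k = 0")
        case False
        then have "\<forall>j<d l. \<forall>i<d l. rep l (st x) j i = 0" using none by blast
        then show ?thesis by simp
      qed simp
    qed
    finally show False using h by simp
  qed
next
  assume "\<exists>l r k j i. r < d l \<and> k < d l \<and> j < d l \<and> i < d l \<and> rep l y r k \<noteq> 0 \<and> rep l (st x) j i \<noteq> 0"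
  then obtain l r k j i where
    idx: "r < d l" "k < d l" "j < d l" "i < d l" and nz: "rep l y r k \<noteq> 0" "rep l (st x) j i \<noteq> 0"
    by blast
  have "sprod M (sprod M (unit l i r) (bvec y)) (unit l k j) x
      = wt l * (\<Sum>p<d l. \<Sum>q<d l. (if q = j \<and> p = i then rep l y r k else 0) * rep l (st x) q p)"
    using idx by (intro fourier_inversion_unit) (auto simp: repv_mult_unit repv_unit_mult)
  also have "\<dots> = wt l * (rep l y r k * rep l (st x) j i)"
    using idx by (simp add: if_conj_zero sum_if_zero)
  finally have "sprod M (sprod M (unit l i r) (bvec y)) (unit l k j) x \<noteq> 0"
    using nz weight_nonzero by simp
  then show "lr_step M x y" unfolding lr_step_def by blast
qed

end

section \<open>Valuations and residues\<close>

locale residue_valuation =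
  fixes \<nu> :: "'k::field \<Rightarrow> 'g::linordered_ab_group_add"
    and \<pi> :: "'k \<Rightarrow> 'f::field"
  assumes valuation: "valuation \<nu>"
    and residue: "residue_map \<nu> \<pi>"
    and formally_real: "formally_real TYPE('f)"
begin

abbreviation \<O> where "\<O> \<equiv> val_ring \<nu>"

lemma val_mult: "x \<noteq> 0 \<Longrightarrow> y \<noteq> 0 \<Longrightarrow> \<nu> (x * y) = \<nu> x + \<nu> y"
  using valuation unfolding valuation_def by blast

lemma val_add: "x \<noteq> 0 \<Longrightarrow> y \<noteq> 0 \<Longrightarrow> x + y \<noteq> 0 \<Longrightarrow> min (\<nu> x) (\<nu> y) \<le> \<nu> (x + y)"
  using valuation unfolding valuation_def by blast

lemma val_one: "\<nu> 1 = 0"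
  using val_mult[of 1 1] by simp

lemma val_inverse: "x \<noteq> 0 \<Longrightarrow> \<nu> (inverse x) = - \<nu> x"
  using val_mult[of x "inverse x"] val_one by (simp add: eq_neg_iff_add_eq_0 add.commute)

lemma val_ring_iff: "x \<in> \<O> \<longleftrightarrow> x = 0 \<or> 0 \<le> \<nu> x"
  unfolding val_ring_def by simp

lemma val_ring_zero [simp]: "0 \<in> \<O>"
  by (simp add: val_ring_iff)

lemma val_ring_one [simp]: "1 \<in> \<O>"
  by (simp add: val_ring_iff val_one)

lemma val_ring_mult [intro]: "x \<in> \<O> \<Longrightarrow> y \<in> \<O> \<Longrightarrow> x * y \<in> \<O>"
  by (cases "x = 0"; cases "y = 0") (auto simp: val_ring_iff val_mult)

lemma val_ring_add [intro]:
  assumes "x \<in> \<O>" "y \<in> \<O>"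
  shows "x + y \<in> \<O>"
proof (cases "x = 0 \<or> y = 0 \<or> x + y = 0")
  case False
  then have "min (\<nu> x) (\<nu> y) \<le> \<nu> (x + y)" using val_add by blast
  moreover have "0 \<le> \<nu> x" "0 \<le> \<nu> y" using assms False by (auto simp: val_ring_iff)
  ultimately show ?thesis by (metis val_ring_iff min.bounded_iff order_trans)
qed (use assms in auto)

lemma val_ring_sum [intro]: "(\<And>i. i \<in> A \<Longrightarrow> g i \<in> \<O>) \<Longrightarrow> sum g A \<in> \<O>"
  by (induction A rule: infinite_finite_induct) auto

lemma val_ring_of_nat [simp]: "of_nat n \<in> \<O>"
  by (induction n) auto

lemma res_add: "x \<in> \<O> \<Longrightarrow> y \<in> \<O> \<Longrightarrow> \<pi> (x + y) = \<pi> x + \<pi> y"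
  using residue unfolding residue_map_def by blast

lemma res_mult: "x \<in> \<O> \<Longrightarrow> y \<in> \<O> \<Longrightarrow> \<pi> (x * y) = \<pi> x * \<pi> y"
  using residue unfolding residue_map_def by blast

lemma res_one [simp]: "\<pi> 1 = 1"
  using residue unfolding residue_map_def by blast

lemma res_zero [simp]: "\<pi> 0 = 0"
  using res_add[of 0 0] by (metis add.right_neutral add_left_cancel val_ring_zero)

lemma res_eq_zero_iff: "x \<in> \<O> \<Longrightarrow> \<pi> x = 0 \<longleftrightarrow> x \<in> max_ideal \<nu>"
  using residue unfolding residue_map_def by blast

lemma res_sum: "(\<And>i. i \<in> A \<Longrightarrow> g i \<in> \<O>) \<Longrightarrow> \<pi> (sum g A) = (\<Sum>i\<in>A. \<pi> (g i))"
  by (induction A rule: infinite_finite_induct) (simp_all add: res_add val_ring_sum)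

lemma res_sum2:
  "(\<And>i j. i \<in> I \<Longrightarrow> j \<in> J \<Longrightarrow> g i j \<in> \<O>) \<Longrightarrow>
     \<pi> (\<Sum>i\<in>I. \<Sum>j\<in>J. g i j) = (\<Sum>i\<in>I. \<Sum>j\<in>J. \<pi> (g i j))"
  by (simp add: res_sum val_ring_sum)

lemma res_sum3:
  "(\<And>i j k. i \<in> I \<Longrightarrow> j \<in> J \<Longrightarrow> k \<in> K \<Longrightarrow> g i j k \<in> \<O>) \<Longrightarrow>
     \<pi> (\<Sum>i\<in>I. \<Sum>j\<in>J. \<Sum>k\<in>K. g i j k) = (\<Sum>i\<in>I. \<Sum>j\<in>J. \<Sum>k\<in>K. \<pi> (g i j k))"
  by (simp add: res_sum val_ring_sum)

lemma res_of_nat: "\<pi> (of_nat n) = of_nat n"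
  by (induction n) (auto simp: res_add)

lemma res_unit_nonzero: "x \<noteq> 0 \<Longrightarrow> \<nu> x = 0 \<Longrightarrow> \<pi> x \<noteq> 0"
  using res_eq_zero_iff[of x] by (auto simp: val_ring_iff max_ideal_def)

lemma res_inverse:
  assumes "x \<noteq> 0" "\<nu> x = 0"
  shows "\<pi> (inverse x) = inverse (\<pi> x)"
proof -
  have "x \<in> \<O>" "inverse x \<in> \<O>" using assms val_inverse[of x] by (simp_all add: val_ring_iff)
  then have "\<pi> x * \<pi> (inverse x) = 1" using res_mult[of x "inverse x"] assms by simp
  then show ?thesis by (metis inverse_unique)
qed

text \<open>A formally real field has characteristic 0, since otherwise -1 = 1 + ... + 1 would be a sum of squares.\<close>

lemma residue_of_nat_nonzero:
  assumes "0 < n"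
  shows "(of_nat n :: 'f) \<noteq> 0"
proof
  assume "(of_nat n :: 'f) = 0"
  then have "sum_list (map (\<lambda>x. x * x) (replicate (n - 1) (1::'f))) = -1"
    using assms by (simp add: sum_list_replicate of_nat_diff)
  then show False using formally_real unfolding formally_real_def by blast
qed

lemma of_nat_val_unit:
  assumes "0 < n"
  shows "(of_nat n :: 'k) \<noteq> 0" "\<nu> (of_nat n :: 'k) = 0"
proof -
  have res_n: "\<pi> (of_nat n) \<noteq> 0" using residue_of_nat_nonzero[OF assms] by (simp add: res_of_nat)
  then show nz: "(of_nat n :: 'k) \<noteq> 0" by auto
  have "of_nat n \<notin> max_ideal \<nu>" using res_eq_zero_iff[of "of_nat n"] res_n by simp
  moreover have "0 \<le> \<nu> (of_nat n :: 'k)" using val_ring_of_nat[of n] nz by (simp add: val_ring_iff)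
  ultimately show "\<nu> (of_nat n :: 'k) = 0" using nz by (auto simp: max_ideal_def)
qed

end

locale asymptotic_algebra = residue_valuation \<nu> \<pi>
  for \<nu> :: "'k::field \<Rightarrow> 'g::linordered_ab_group_add" and \<pi> :: "'k \<Rightarrow> 'f::field" +
  fixes m :: "'b::finite \<Rightarrow> 'b \<Rightarrow> 'b \<Rightarrow> 'k"
    and st :: "'b \<Rightarrow> 'b"
    and tau :: "'b \<Rightarrow> 'k"
    and d :: "'l::finite \<Rightarrow> nat"
    and rho :: "'l \<Rightarrow> 'b \<Rightarrow> nat \<Rightarrow> nat \<Rightarrow> 'k"
    and c :: "'l \<Rightarrow> 'k"
    and a :: "'l \<Rightarrow> 'g"
    and vp :: "'g \<Rightarrow> 'k"
  assumes assoc_unital: "is_assoc_unital m"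
    and st_st: "\<And>b. st (st b) = b"
    and st_anti: "\<And>b b' e. m b b' e = m (st b') (st b) (st e)"
    and tau_comm: "\<And>u v. tauH tau (sprod m u v) = tauH tau (sprod m v u)"
    and dual_basis: "\<And>b b'. tauH tau (sprod m (bvec b) (bvec (st b'))) = (if b = b' then 1 else 0)"
    and reps: "\<And>l. is_rep m (d l) (rho l)"
    and wedderburn: "wedderburn d rho"
    and schur_nonzero: "\<And>l. c l \<noteq> 0"
    and tau_schur: "\<And>b. tau b = (\<Sum>l\<in>UNIV. inverse (c l) * (\<Sum>i<d l. rho l b i i))"
    and a_schur: "\<And>l. a l + a l = - \<nu> (c l)"
    and vp_add: "\<And>x y. x \<in> gen_subgroup (range a) \<Longrightarrow> y \<in> gen_subgroup (range a) \<Longrightarrow>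
                   vp (x + y) = vp x * vp y"
    and vp_val: "\<And>x. x \<in> gen_subgroup (range a) \<Longrightarrow> vp x \<noteq> 0 \<and> \<nu> (vp x) = x"
    and balanced: "\<And>l S s i j. star_sym_basis m tau st S \<Longrightarrow> s \<in> S \<Longrightarrow> i < d l \<Longrightarrow> j < d l \<Longrightarrow>
                   repv (rho l) s i j = 0 \<or> - a l \<le> \<nu> (repv (rho l) s i j)"
begin

abbreviation mul where "mul \<equiv> sprod m"
abbreviation R where "R l \<equiv> repv (rho l)"
abbreviation tH where "tH \<equiv> tauH tau"
abbreviation stH where "stH \<equiv> starH st"

lemma repv_mul: "i < d l \<Longrightarrow> j < d l \<Longrightarrow> R l (mul u v) i j = (\<Sum>k<d l. R l u i k * R l v k j)"
  using reps[of l] unfolding is_rep_def by blast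

lemma mul_assoc: "mul (mul u v) w = mul u (mul v w)"
  using assoc_unital unfolding is_assoc_unital_def by blast

lemma dim_pos: "0 < d l"
  using wedderburn unfolding wedderburn_def by blast

lemma tau_eq_traces: "tH h = (\<Sum>l\<in>UNIV. inverse (c l) * (\<Sum>i<d l. R l h i i))"
proof -
  have "tH h = (\<Sum>b\<in>UNIV. \<Sum>l\<in>UNIV. \<Sum>i<d l. inverse (c l) * (h b * rho l b i i))"
    unfolding tauH_def tau_schur by (simp add: sum_distrib_left mult_ac)
  also have "\<dots> = (\<Sum>l\<in>UNIV. \<Sum>i<d l. \<Sum>b\<in>UNIV. inverse (c l) * (h b * rho l b i i))"
    by (rule sum_rotate3)
  also have "\<dots> = (\<Sum>l\<in>UNIV. inverse (c l) * (\<Sum>i<d l. R l h i i))"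
    unfolding repv_def by (simp add: sum_distrib_left)
  finally show ?thesis .
qed

lemma tau_mul_dual: "tH (mul u (bvec (st x))) = u x"
proof -
  have "tH (mul u v) = (\<Sum>b\<in>UNIV. \<Sum>b'\<in>UNIV. u b * v b' * tH (mul (bvec b) (bvec b')))" for v
  proof -
    have "tH (mul u v) = (\<Sum>e\<in>UNIV. \<Sum>b\<in>UNIV. \<Sum>b'\<in>UNIV. u b * v b' * (m b b' e * tau e))"
      unfolding tauH_def sprod_def by (simp add: sum_distrib_right sum_distrib_left mult_ac)
    also have "\<dots> = (\<Sum>b\<in>UNIV. \<Sum>b'\<in>UNIV. \<Sum>e\<in>UNIV. u b * v b' * (m b b' e * tau e))"
      by (rule sum_rotate3)
    finally show ?thesis unfolding tauH_def by (simp add: sum_distrib_left)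
  qed
  moreover have "bvec (st x) b' * t = (if b' = st x then t else 0)" for b' and t :: 'k
    by (simp add: bvec_def)
  ultimately show ?thesis by (simp add: mult.assoc dual_basis)
qed

lemma fourier_inversion_H: "u x = (\<Sum>l\<in>UNIV. inverse (c l) * (\<Sum>i<d l. \<Sum>j<d l. R l u i j * rho l (st x) j i))"
  unfolding tau_mul_dual[symmetric] tau_eq_traces
  by (intro sum.cong refl arg_cong2[where f="(*)"]) (simp add: repv_mul)

lemma wedderburn_ex1: "\<exists>!h. \<forall>l i j. i < d l \<longrightarrow> j < d l \<longrightarrow> R l h i j = M l i j"
  using wedderburn unfolding wedderburn_def by (elim conjE) (erule allE)

lemma repv_inject:
  assumes "\<And>l i j. i < d l \<Longrightarrow> j < d l \<Longrightarrow> R l h i j = R l h' i j"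
  shows "h = h'"
proof -
  have "\<forall>l i j. i < d l \<longrightarrow> j < d l \<longrightarrow> R l h' i j = R l h i j" using assms by simp
  then show ?thesis using wedderburn_ex1[of "\<lambda>l. R l h"] by auto
qed

definition matrix_unit :: "'l \<Rightarrow> nat \<Rightarrow> nat \<Rightarrow> 'b \<Rightarrow> 'k" where
  "matrix_unit l i j = (THE h. \<forall>l' p q. p < d l' \<longrightarrow> q < d l' \<longrightarrow>
     R l' h p q = (if l' = l \<and> p = i \<and> q = j then 1 else 0))"

lemma repv_matrix_unit:
  "p < d l' \<Longrightarrow> q < d l' \<Longrightarrow> R l' (matrix_unit l i j) p q = (if l' = l \<and> p = i \<and> q = j then 1 else 0)"
  using theI'[OF wedderburn_ex1[of "\<lambda>l' p q. if l' = l \<and> p = i \<and> q = j then 1 else 0"]]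
  unfolding matrix_unit_def by blast

sublocale H: split_semisimple m d rho matrix_unit "\<lambda>l. inverse (c l)" st
  by unfold_locales (auto simp: repv_mul repv_matrix_unit schur_nonzero intro: fourier_inversion_H)

lemma star_star [simp]: "stH (stH u) = u"
  by (simp add: starH_def st_st)

lemma star_bvec: "stH (bvec b) = bvec (st b)"
  unfolding starH_def bvec_def by (metis st_st)

lemma star_sum: "stH (\<lambda>b. \<Sum>x\<in>I. F x b) = (\<lambda>b. \<Sum>x\<in>I. stH (F x) b)"
  by (simp add: starH_def)

lemma star_mul: "stH (mul u v) = mul (stH v) (stH u)"
proof
  fix e
  have "mul (stH v) (stH u) e = (\<Sum>b\<in>UNIV. \<Sum>b'\<in>UNIV. v (st b) * u (st b') * m b b' e)"
    unfolding sprod_def starH_def by simp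
  also have "\<dots> = (\<Sum>b\<in>UNIV. \<Sum>b'\<in>UNIV. v b * u (st b') * m (st b) b' e)"
    using sum_involution_reindex[OF st_st, of "\<lambda>b. \<Sum>b'\<in>UNIV. v b * u (st b') * m (st b) b' e"]
    by (simp add: st_st)
  also have "\<dots> = (\<Sum>b\<in>UNIV. \<Sum>b'\<in>UNIV. v b * u b' * m (st b) (st b') e)"
  proof (rule sum.cong[OF refl])
    fix b
    show "(\<Sum>b'\<in>UNIV. v b * u (st b') * m (st b) b' e) = (\<Sum>b'\<in>UNIV. v b * u b' * m (st b) (st b') e)"
      using sum_involution_reindex[OF st_st, of "\<lambda>b'. v b * u b' * m (st b) (st b') e"] by (simp add: st_st)
  qed
  also have "\<dots> = (\<Sum>b\<in>UNIV. \<Sum>b'\<in>UNIV. u b' * v b * m b' b (st e))"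
    by (intro sum.cong refl) (simp add: st_anti[of _ _ "st e"] st_st mult_ac)
  also have "\<dots> = mul u v (st e)"
    unfolding sprod_def by (rule sum.swap)
  finally show "stH (mul u v) e = mul (stH v) (stH u) e" by (simp add: starH_def)
qed

definition unitH :: "'b \<Rightarrow> 'k" where
  "unitH = (SOME e. \<forall>u. mul e u = u \<and> mul u e = u)"

lemma unitH_mul: "mul unitH u = u" and mul_unitH: "mul u unitH = u"
proof -
  have "\<exists>e. \<forall>u. mul e u = u \<and> mul u e = u" using assoc_unital unfolding is_assoc_unital_def by blast
  then have "\<forall>u. mul unitH u = u \<and> mul u unitH = u" unfolding unitH_def by (rule someI_ex)
  then show "mul unitH u = u" "mul u unitH = u" by auto
qed

lemma star_unitH: "stH unitH = unitH"
proof -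
  have left_unit: "mul (stH unitH) u = u" for u
  proof -
    have "mul (stH unitH) u = stH (mul (stH u) unitH)" by (simp add: star_mul)
    then show ?thesis by (simp add: mul_unitH)
  qed
  show ?thesis using left_unit[of unitH] by (simp add: mul_unitH)
qed

lemma repv_unitH:
  assumes "p < d l" "q < d l"
  shows "R l unitH p q = (if p = q then 1 else 0)"
proof -
  have "R l (mul unitH (matrix_unit l q q)) p q = R l unitH p q"
    using assms by (simp add: H.repv_mult_unit)
  then show ?thesis using assms by (simp add: unitH_mul repv_matrix_unit)
qed

lemma tau_eq_unitH: "tau b = unitH b"
proof -
  have "tau b = tH (mul unitH (bvec (st (st b))))"
    by (simp add: unitH_mul st_st tauH_def bvec_def)
  also have "\<dots> = unitH (st b)" by (rule tau_mul_dual)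
  finally show ?thesis using star_unitH by (metis starH_def)
qed

lemma tau_st: "tau (st b) = tau b"
  using star_unitH by (metis starH_def tau_eq_unitH)

lemma tau_star: "tH (stH h) = tH h"
proof -
  have "tH (stH h) = (\<Sum>b\<in>UNIV. h (st b) * tau (st b))"
    unfolding tauH_def starH_def by (simp add: tau_st)
  also have "\<dots> = tH h" unfolding tauH_def by (rule sum_involution_reindex[OF st_st])
  finally show ?thesis .
qed

definition central_idem :: "'l \<Rightarrow> 'b \<Rightarrow> 'k" where
  "central_idem l = (\<lambda>b. \<Sum>i<d l. matrix_unit l i i b)"

lemma repv_central_idem:
  "p < d l' \<Longrightarrow> q < d l' \<Longrightarrow> R l' (central_idem l) p q = (if l' = l \<and> p = q then 1 else 0)"
  unfolding central_idem_def repv_sum by (auto simp: repv_matrix_unit if_conj_zero)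

lemma repv_central_idem_mul:
  "p < d l' \<Longrightarrow> q < d l' \<Longrightarrow> R l' (mul (central_idem l) h) p q = (if l' = l then R l' h p q else 0)"
  by (auto simp: repv_mul repv_central_idem if_conj_zero)

lemma repv_mul_central_idem:
  "p < d l' \<Longrightarrow> q < d l' \<Longrightarrow> R l' (mul h (central_idem l)) p q = (if l' = l then R l' h p q else 0)"
  by (auto simp: repv_mul repv_central_idem if_conj_zero eq_commute[of _ q])

lemma central_idem_mul_comm: "mul (central_idem l) h = mul h (central_idem l)"
  by (rule repv_inject) (simp add: repv_central_idem_mul repv_mul_central_idem)

lemma central_idem_orthogonal: "l \<noteq> l' \<Longrightarrow> mul (central_idem l) (central_idem l') = (\<lambda>b. 0)"
  by (rule repv_inject) (auto simp: repv_central_idem_mul repv_central_idem)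

lemma sum_central_idem: "(\<lambda>b. \<Sum>l\<in>UNIV. central_idem l b) = unitH"
  by (rule repv_inject) (simp add: repv_sum repv_central_idem repv_unitH if_conj_zero)

lemma tau_central_idem: "tH (central_idem l) = of_nat (d l) * inverse (c l)"
  by (simp add: tau_eq_traces repv_central_idem if_conj_zero)

lemma star_central_idem_mul_comm: "mul (stH (central_idem l)) h = mul h (stH (central_idem l))"
  by (metis star_star star_mul central_idem_mul_comm)

text \<open>The involution permutes the simple components of H: each image of a central primitive
idempotent acts on the l-th simple module by a scalar, which is nonzero for exactly one index.\<close>

definition star_idem_scalar :: "'l \<Rightarrow> 'l \<Rightarrow> 'k" where
  "star_idem_scalar l l' = R l (stH (central_idem l')) 0 0"

lemma repv_star_central_idem_scalar:
  assumes "p < d l" "q < d l"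
  shows "R l (stH (central_idem l')) p q = (if p = q then star_idem_scalar l l' else 0)"
proof -
  have "R l (mul (stH (central_idem l')) (matrix_unit l q 0)) p 0
      = R l (mul (matrix_unit l q 0) (stH (central_idem l'))) p 0"
    by (simp add: star_central_idem_mul_comm)
  then show ?thesis
    using assms dim_pos[of l] by (simp add: H.repv_mult_unit H.repv_unit_mult star_idem_scalar_def)
qed

lemma sum_star_idem_scalar: "(\<Sum>l'\<in>UNIV. star_idem_scalar l l') = 1"
proof -
  have "(\<Sum>l'\<in>UNIV. star_idem_scalar l l') = R l (stH unitH) 0 0"
    unfolding sum_central_idem[symmetric] star_sum repv_sum star_idem_scalar_def ..
  also have "\<dots> = 1" using dim_pos[of l] by (simp add: star_unitH repv_unitH)
  finally show ?thesis .
qed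

lemma star_idem_scalar_orthogonal: "l' \<noteq> l'' \<Longrightarrow> star_idem_scalar l l' * star_idem_scalar l l'' = 0"
proof -
  assume "l' \<noteq> l''"
  have "mul (stH (central_idem l')) (stH (central_idem l'')) = stH (mul (central_idem l'') (central_idem l'))"
    by (simp only: star_mul)
  also have "\<dots> = (\<lambda>b. 0)" using \<open>l' \<noteq> l''\<close> by (simp add: central_idem_orthogonal starH_def)
  finally have "R l (mul (stH (central_idem l')) (stH (central_idem l''))) 0 0 = 0" by simp
  then show ?thesis
    using dim_pos[of l] by (simp add: repv_mul repv_star_central_idem_scalar if_conj_zero)
qed

definition star_perm :: "'l \<Rightarrow> 'l" where
  "star_perm l = (SOME l'. star_idem_scalar l l' \<noteq> 0)"

lemma star_idem_scalar_eq: "star_idem_scalar l l' = (if l' = star_perm l then 1 else 0)"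
proof -
  have "\<exists>l'. star_idem_scalar l l' \<noteq> 0"
    using sum_star_idem_scalar[of l] by (metis (mono_tags) sum.neutral zero_neq_one)
  then have nz: "star_idem_scalar l (star_perm l) \<noteq> 0"
    unfolding star_perm_def by (rule someI_ex)
  then have off: "star_idem_scalar l l' = 0" if "l' \<noteq> star_perm l" for l'
    using star_idem_scalar_orthogonal[OF that, of l] nz by simp
  have "(\<Sum>l'\<in>UNIV. star_idem_scalar l l') = (\<Sum>l'\<in>UNIV. if l' = star_perm l then star_idem_scalar l l' else 0)"
    by (intro sum.cong refl) (simp add: off)
  then show ?thesis using sum_star_idem_scalar[of l] off by simp
qed

lemma repv_star_central_idem:
  "p < d l \<Longrightarrow> q < d l \<Longrightarrow> R l (stH (central_idem l')) p q = (if l' = star_perm l \<and> p = q then 1 else 0)"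
  by (simp add: repv_star_central_idem_scalar star_idem_scalar_eq)

lemma star_central_idem_eq_sum: "stH (central_idem l') = (\<lambda>b. \<Sum>l\<in>{l. star_perm l = l'}. central_idem l b)"
  by (rule repv_inject) (simp add: repv_sum repv_central_idem repv_star_central_idem if_conj_zero)

lemma star_perm_star_perm [simp]: "star_perm (star_perm l) = l"
proof -
  have "R l (central_idem l) 0 0 = R l (stH (stH (central_idem l))) 0 0" by simp
  also have "\<dots> = (\<Sum>k\<in>{k. star_perm k = l}. R l (stH (central_idem k)) 0 0)"
    unfolding star_central_idem_eq_sum star_sum repv_sum ..
  also have "\<dots> = (if star_perm (star_perm l) = l then 1 else 0)"
    using dim_pos[of l] by (simp add: repv_star_central_idem)
  finally show ?thesis using dim_pos[of l] by (simp add: repv_central_idem split: if_splits)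
qed

lemma star_central_idem: "stH (central_idem l) = central_idem (star_perm l)"
  by (rule repv_inject) (auto simp: repv_star_central_idem repv_central_idem)

lemma a_star_perm: "a (star_perm l) = a l"
proof -
  have "tH (central_idem (star_perm l)) = tH (central_idem l)"
    by (metis star_central_idem tau_star)
  then have "of_nat (d (star_perm l)) * inverse (c (star_perm l)) = of_nat (d l) * inverse (c l)"
    by (simp add: tau_central_idem)
  \<comment> \<open>the dimensions are units of the valuation ring since the residue field has characteristic 0\<close>
  then have "\<nu> (c (star_perm l)) = \<nu> (c l)"
    using of_nat_val_unit[OF dim_pos] schur_nonzero
    by (metis val_mult val_inverse inverse_nonzero_iff_nonzero add_0 neg_equal_iff_equal)
  then show ?thesis using a_schur by (metis add_self_cancel)
qed

section \<open>The structure constants of J\<close>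

text \<open>In the notation of the paper, vpow_a l = v^(a_l), normed_schur l = f_l and
reduced_rep l b = c^l(b).\<close>

definition vpow_a :: "'l \<Rightarrow> 'k" where
  "vpow_a l = vp (a l)"

definition normed_schur :: "'l \<Rightarrow> 'k" where
  "normed_schur l = vp (a l + a l) * c l"

lemma vpow_a_nonzero: "vpow_a l \<noteq> 0" and val_vpow_a: "\<nu> (vpow_a l) = a l"
  using vp_val[OF gen_base[OF rangeI]] unfolding vpow_a_def by auto

lemma normed_schur_eq: "normed_schur l = vpow_a l * vpow_a l * c l"
  unfolding normed_schur_def vpow_a_def using vp_add[OF gen_base[OF rangeI] gen_base[OF rangeI]] by simp

lemma normed_schur_nonzero: "normed_schur l \<noteq> 0" and val_normed_schur: "\<nu> (normed_schur l) = 0"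
proof -
  show "normed_schur l \<noteq> 0" unfolding normed_schur_eq using vpow_a_nonzero schur_nonzero by simp
  have "\<nu> (normed_schur l) = a l + a l + \<nu> (c l)"
    unfolding normed_schur_eq using vpow_a_nonzero schur_nonzero by (simp add: val_mult val_vpow_a)
  then show "\<nu> (normed_schur l) = 0" using a_schur[of l] by simp
qed

lemma inverse_normed_schur_in_val_ring: "inverse (normed_schur l) \<in> \<O>"
  by (simp add: val_ring_iff val_inverse normed_schur_nonzero val_normed_schur)

lemma res_normed_schur_nonzero: "\<pi> (normed_schur l) \<noteq> 0"
  using normed_schur_nonzero val_normed_schur by (rule res_unit_nonzero)

lemma res_inverse_normed_schur: "\<pi> (inverse (normed_schur l)) = inverse (\<pi> (normed_schur l))"
  using normed_schur_nonzero val_normed_schur by (rule res_inverse)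

text \<open>gamma_{x,y,z} is the residue of tau(xyz w) for this central element w (gammaJ_eq_res_tau);
w is self-adjoint because a is constant on the orbits of star_perm.\<close>

definition central_vpow :: "'b \<Rightarrow> 'k" where
  "central_vpow = (\<lambda>b. \<Sum>l\<in>UNIV. vpow_a l * central_idem l b)"

lemma repv_central_vpow:
  "p < d l \<Longrightarrow> q < d l \<Longrightarrow> R l central_vpow p q = (if p = q then vpow_a l else 0)"
  unfolding central_vpow_def by (simp add: repv_sum repv_scale repv_central_idem if_conj_zero)

lemma star_central_vpow: "stH central_vpow = central_vpow"
proof -
  have "stH central_vpow = (\<lambda>b. \<Sum>l\<in>UNIV. vpow_a l * central_idem (star_perm l) b)"
    unfolding central_vpow_def using star_central_idem by (simp add: starH_def fun_eq_iff)
  also have "\<dots> = (\<lambda>b. \<Sum>l\<in>UNIV. vpow_a (star_perm l) * central_idem l b)"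
    using sum_involution_reindex[of star_perm "\<lambda>l. vpow_a (star_perm l) * central_idem l _"] by simp
  also have "\<dots> = central_vpow"
    unfolding central_vpow_def vpow_a_def a_star_perm ..
  finally show ?thesis .
qed

lemma central_vpow_mul_comm: "mul central_vpow h = mul h central_vpow"
  by (rule repv_inject) (simp add: repv_mul repv_central_vpow mult.commute)

lemma tau_mul_central_vpow:
  "tH (mul h central_vpow) = (\<Sum>l\<in>UNIV. inverse (c l) * (vpow_a l * (\<Sum>i<d l. R l h i i)))"
  unfolding tau_eq_traces by (simp add: repv_mul repv_central_vpow sum_distrib_left mult_ac)

lemma tau_star_mul_central_vpow: "tH (mul (stH u) central_vpow) = tH (mul u central_vpow)"
proof -
  have "tH (mul (stH u) central_vpow) = tH (stH (mul central_vpow u))"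
    by (simp add: star_mul star_central_vpow)
  also have "\<dots> = tH (mul u central_vpow)"
    by (simp add: tau_star central_vpow_mul_comm)
  finally show ?thesis .
qed

lemma tau_mul_central_vpow_comm: "tH (mul (mul u v) central_vpow) = tH (mul (mul v u) central_vpow)"
proof -
  have "tH (mul (mul u v) central_vpow) = tH (mul (mul v central_vpow) u)"
    by (simp add: mul_assoc tau_comm[of u])
  also have "\<dots> = tH (mul (mul v u) central_vpow)"
    by (simp add: mul_assoc central_vpow_mul_comm)
  finally show ?thesis .
qed

lemma star_sym_basis_range_bvec: "star_sym_basis m tau st (range bvec)"
  unfolding star_sym_basis_def
proof (intro conjI is_basis_range_bvec)
  have "range st = UNIV" by (metis st_st surjI)
  then show "stH ` range bvec = range bvec"
    by (simp add: image_image star_bvec flip: image_image[of bvec st])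
  show "\<forall>s\<in>range bvec. \<forall>t\<in>range bvec. tH (mul s (stH t)) = (if s = t then 1 else 0)"
    by (auto simp: star_bvec dual_basis bvec_inject)
qed

lemma rho_balanced: "i < d l \<Longrightarrow> j < d l \<Longrightarrow> rho l b i j = 0 \<or> - a l \<le> \<nu> (rho l b i j)"
  using balanced[OF star_sym_basis_range_bvec, of "bvec b" i l j] by simp

definition scaled_rho :: "'l \<Rightarrow> 'b \<Rightarrow> nat \<Rightarrow> nat \<Rightarrow> 'k" where
  "scaled_rho l b i j = vpow_a l * rho l b i j"

lemma scaled_rho_in_val_ring:
  assumes "i < d l" "j < d l"
  shows "scaled_rho l b i j \<in> \<O>"
proof (cases "rho l b i j = 0")
  case False
  then have "- a l \<le> \<nu> (rho l b i j)" using rho_balanced[OF assms, of b] by simp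
  then have "a l + - a l \<le> a l + \<nu> (rho l b i j)" by (rule add_left_mono)
  then show ?thesis unfolding scaled_rho_def using False vpow_a_nonzero
    by (simp add: val_ring_iff val_mult val_vpow_a)
qed (simp add: scaled_rho_def)

definition reduced_rep :: "'l \<Rightarrow> 'b \<Rightarrow> nat \<Rightarrow> nat \<Rightarrow> 'f" where
  "reduced_rep l b i j = \<pi> (scaled_rho l b i j)"

abbreviation MJ where "MJ \<equiv> multJ vp \<pi> a c d rho st"
abbreviation gJ where "gJ \<equiv> gammaJ vp \<pi> a c d rho"

lemma gammaJ_eq: "gJ x y z = (\<Sum>l\<in>UNIV. inverse (\<pi> (normed_schur l)) *
    (\<Sum>s<d l. \<Sum>t<d l. \<Sum>u<d l. reduced_rep l x s t * reduced_rep l y t u * reduced_rep l z u s))"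
  unfolding gammaJ_def Let_def reduced_rep_def scaled_rho_def normed_schur_def vpow_a_def
  by (simp add: sum_distrib_left mult.assoc)

lemma sum_reduced_rep3:
  "(\<Sum>s<d l. \<Sum>t<d l. \<Sum>u<d l. reduced_rep l x s t * reduced_rep l y t u * reduced_rep l z u s)
     = \<pi> (\<Sum>s<d l. \<Sum>t<d l. \<Sum>u<d l. scaled_rho l x s t * scaled_rho l y t u * scaled_rho l z u s)"
proof -
  have "(\<Sum>s<d l. \<Sum>t<d l. \<Sum>u<d l. reduced_rep l x s t * reduced_rep l y t u * reduced_rep l z u s)
      = (\<Sum>s<d l. \<Sum>t<d l. \<Sum>u<d l. \<pi> (scaled_rho l x s t * scaled_rho l y t u * scaled_rho l z u s))"
    unfolding reduced_rep_def
    by (intro sum.cong refl) (simp add: res_mult val_ring_mult scaled_rho_in_val_ring)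
  also have "\<dots> = \<pi> (\<Sum>s<d l. \<Sum>t<d l. \<Sum>u<d l. scaled_rho l x s t * scaled_rho l y t u * scaled_rho l z u s)"
    by (subst res_sum3) (auto intro!: val_ring_mult scaled_rho_in_val_ring)
  finally show ?thesis .
qed

lemma trace_mul3:
  "(\<Sum>i<d l. R l (mul (mul (bvec x) (bvec y)) (bvec z)) i i)
     = (\<Sum>s<d l. \<Sum>t<d l. \<Sum>u<d l. rho l x s t * rho l y t u * rho l z u s)"
proof -
  have "(\<Sum>i<d l. R l (mul (mul (bvec x) (bvec y)) (bvec z)) i i)
      = (\<Sum>s<d l. \<Sum>u<d l. \<Sum>t<d l. rho l x s t * rho l y t u * rho l z u s)"
    by (simp add: repv_mul sum_distrib_right)
  also have "\<dots> = (\<Sum>s<d l. \<Sum>t<d l. \<Sum>u<d l. rho l x s t * rho l y t u * rho l z u s)"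
    by (rule sum.cong[OF refl], rule sum.swap)
  finally show ?thesis .
qed

lemma gammaJ_eq_res_tau: "gJ x y z = \<pi> (tH (mul (mul (mul (bvec x) (bvec y)) (bvec z)) central_vpow))"
proof -
  define T where "T l = (\<Sum>s<d l. \<Sum>t<d l. \<Sum>u<d l. rho l x s t * rho l y t u * rho l z u s)" for l
  define S where "S l = (\<Sum>s<d l. \<Sum>t<d l. \<Sum>u<d l. scaled_rho l x s t * scaled_rho l y t u * scaled_rho l z u s)" for l
  have S_in: "S l \<in> \<O>" for l
    unfolding S_def by (intro val_ring_sum val_ring_mult scaled_rho_in_val_ring) auto
  have S_eq: "inverse (normed_schur l) * S l = inverse (c l) * (vpow_a l * T l)" for l
    unfolding S_def T_def scaled_rho_def normed_schur_eq
    using vpow_a_nonzero[of l] schur_nonzero[of l] by (simp add: sum_distrib_left field_simps)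
  have "gJ x y z = (\<Sum>l\<in>UNIV. \<pi> (inverse (normed_schur l) * S l))"
    unfolding gammaJ_eq sum_reduced_rep3 S_def[symmetric]
    by (simp add: res_mult S_in inverse_normed_schur_in_val_ring res_inverse_normed_schur)
  also have "\<dots> = \<pi> (\<Sum>l\<in>UNIV. inverse (normed_schur l) * S l)"
    by (simp add: res_sum S_in inverse_normed_schur_in_val_ring val_ring_mult)
  also have "\<dots> = \<pi> (tH (mul (mul (mul (bvec x) (bvec y)) (bvec z)) central_vpow))"
    unfolding S_eq tau_mul_central_vpow trace_mul3 T_def ..
  finally show ?thesis .
qed

lemma gammaJ_cyclic: "gJ x y z = gJ y z x"
  unfolding gammaJ_eq_res_tau
  using tau_mul_central_vpow_comm[of "mul (bvec y) (bvec z)" "bvec x"] by (simp add: mul_assoc)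

lemma gammaJ_star: "gJ (st y) (st x) (st z) = gJ x y z"
proof -
  have "mul (mul (bvec (st y)) (bvec (st x))) (bvec (st z)) = stH (mul (bvec z) (mul (bvec x) (bvec y)))"
    by (simp add: star_mul star_bvec)
  then show ?thesis
    unfolding gammaJ_eq_res_tau by (simp add: tau_star_mul_central_vpow tau_mul_central_vpow_comm[of "bvec z"])
qed

lemma left_step_multJ_of_gammaJ: "gJ w x y \<noteq> 0 \<Longrightarrow> left_step MJ (st y) x"
  unfolding left_step_def multJ_def by (intro exI[of _ "bvec w"]) (simp add: st_st)

lemma left_cell_multJ_of_gammaJ:
  assumes "gJ x y z \<noteq> 0"
  shows "left_cell_equiv MJ x (st y)"
proof -
  have "gJ z x y \<noteq> 0" using assms gammaJ_cyclic[of z x y] gammaJ_cyclic[of x y z] by simp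
  then have "left_step MJ (st y) x" by (rule left_step_multJ_of_gammaJ)
  moreover have "gJ (st z) (st y) (st x) \<noteq> 0"
    using assms gammaJ_cyclic[of "st z" "st y" "st x"] gammaJ_star[where x=x and y=y and z=z] by simp
  then have "left_step MJ x (st y)" using left_step_multJ_of_gammaJ st_st by metis
  ultimately show ?thesis unfolding left_cell_equiv_def by (simp add: cell_equiv_of_steps)
qed

lemma left_cells_multJ_of_gammaJ:
  assumes "gJ x y z \<noteq> 0"
  shows "left_cell_equiv MJ x (st y) \<and> left_cell_equiv MJ y (st z) \<and> left_cell_equiv MJ z (st x)"
proof -
  have "gJ y z x \<noteq> 0" "gJ z x y \<noteq> 0"
    using assms gammaJ_cyclic[of x y z] gammaJ_cyclic[of y z x] by simp_all
  then show ?thesis using assms by (blast intro: left_cell_multJ_of_gammaJ)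
qed

section \<open>J as a split semisimple algebra\<close>

lemma matrix_unit_apply:
  assumes "i < d l" "j < d l"
  shows "matrix_unit l i j b = inverse (c l) * rho l (st b) j i"
proof -
  have "matrix_unit l i j b = inverse (c l) * (\<Sum>p<d l. \<Sum>q<d l. (if p = i \<and> q = j then 1 else 0) * rho l (st b) q p)"
    by (rule H.fourier_inversion_unit) (simp add: repv_matrix_unit)
  then show ?thesis using assms by (simp add: if_conj_zero sum_if_zero)
qed

lemma rho_orthogonality:
  assumes "i < d l" "j < d l" "k < d l'" "p < d l'"
  shows "(\<Sum>b\<in>UNIV. rho l' b k p * rho l (st b) j i) = (if l' = l \<and> k = i \<and> p = j then c l else 0)"
proof -
  have "inverse (c l) * (\<Sum>b\<in>UNIV. rho l' b k p * rho l (st b) j i) = R l' (matrix_unit l i j) k p"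
    unfolding repv_def using assms by (simp add: matrix_unit_apply sum_distrib_left mult_ac)
  then show ?thesis using assms schur_nonzero[of l] by (auto simp: repv_matrix_unit field_simps)
qed

lemma rho_completeness:
  "(\<Sum>l\<in>UNIV. inverse (c l) * (\<Sum>i<d l. \<Sum>j<d l. rho l b i j * rho l (st w) j i)) = (if b = w then 1 else 0)"
  using fourier_inversion_H[of "bvec b" w] by (simp only: repv_bvec) (simp add: bvec_def eq_commute)

lemma reduced_rep_mult:
  "i < d l \<Longrightarrow> j < d l \<Longrightarrow> p < d l' \<Longrightarrow> q < d l' \<Longrightarrow>
     reduced_rep l v i j * reduced_rep l' w p q = \<pi> (scaled_rho l v i j * scaled_rho l' w p q)"
  by (simp add: reduced_rep_def res_mult scaled_rho_in_val_ring)

lemma reduced_rep_orthogonality: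
  assumes "i < d l" "j < d l" "k < d l'" "p < d l'"
  shows "(\<Sum>b\<in>UNIV. reduced_rep l' b k p * reduced_rep l (st b) j i)
      = (if l' = l \<and> k = i \<and> p = j then \<pi> (normed_schur l) else 0)"
proof -
  have "(\<Sum>b\<in>UNIV. reduced_rep l' b k p * reduced_rep l (st b) j i)
      = \<pi> (\<Sum>b\<in>UNIV. scaled_rho l' b k p * scaled_rho l (st b) j i)"
    using assms by (simp add: reduced_rep_mult res_sum val_ring_mult scaled_rho_in_val_ring)
  also have "(\<Sum>b\<in>UNIV. scaled_rho l' b k p * scaled_rho l (st b) j i)
      = vpow_a l' * vpow_a l * (\<Sum>b\<in>UNIV. rho l' b k p * rho l (st b) j i)"
    unfolding scaled_rho_def by (simp add: sum_distrib_left mult_ac)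
  finally show ?thesis using assms by (simp add: rho_orthogonality normed_schur_eq)
qed

lemma reduced_rep_completeness:
  "(\<Sum>l\<in>UNIV. inverse (\<pi> (normed_schur l)) * (\<Sum>i<d l. \<Sum>j<d l. reduced_rep l b i j * reduced_rep l (st w) j i))
     = (if b = w then 1 else 0)"
proof -
  define S where "S l = (\<Sum>i<d l. \<Sum>j<d l. scaled_rho l b i j * scaled_rho l (st w) j i)" for l
  have S_in: "S l \<in> \<O>" for l
    unfolding S_def by (intro val_ring_sum val_ring_mult scaled_rho_in_val_ring) auto
  have "(\<Sum>i<d l. \<Sum>j<d l. reduced_rep l b i j * reduced_rep l (st w) j i) = \<pi> (S l)" for l
    unfolding S_def by (subst res_sum2) (auto simp: reduced_rep_mult scaled_rho_in_val_ring)
  then have "(\<Sum>l\<in>UNIV. inverse (\<pi> (normed_schur l)) * (\<Sum>i<d l. \<Sum>j<d l. reduced_rep l b i j * reduced_rep l (st w) j i))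
      = \<pi> (\<Sum>l\<in>UNIV. inverse (normed_schur l) * S l)"
    by (simp add: res_sum res_mult S_in inverse_normed_schur_in_val_ring res_inverse_normed_schur val_ring_mult)
  also have "(\<Sum>l\<in>UNIV. inverse (normed_schur l) * S l)
      = (\<Sum>l\<in>UNIV. inverse (c l) * (\<Sum>i<d l. \<Sum>j<d l. rho l b i j * rho l (st w) j i))"
    unfolding S_def scaled_rho_def normed_schur_eq using vpow_a_nonzero schur_nonzero
    by (intro sum.cong refl) (simp add: sum_distrib_left field_simps)
  finally show ?thesis by (simp add: rho_completeness)
qed

lemma multJ_repv_basis:
  assumes "i < d l" "j < d l"
  shows "(\<Sum>w\<in>UNIV. MJ x y w * reduced_rep l w i j) = (\<Sum>k<d l. reduced_rep l x i k * reduced_rep l y k j)"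
proof -
  define iv where "iv l' = inverse (\<pi> (normed_schur l'))" for l'
  have "(\<Sum>w\<in>UNIV. MJ x y w * reduced_rep l w i j) = (\<Sum>w\<in>UNIV. \<Sum>l'\<in>UNIV. \<Sum>s<d l'. \<Sum>t<d l'. \<Sum>u<d l'.
      iv l' * (reduced_rep l' x s t * reduced_rep l' y t u) * (reduced_rep l w i j * reduced_rep l' (st w) u s))"
    unfolding multJ_def gammaJ_eq iv_def st_st by (simp add: sum_distrib_left sum_distrib_right mult_ac)
  also have "\<dots> = (\<Sum>l'\<in>UNIV. \<Sum>s<d l'. \<Sum>t<d l'. \<Sum>u<d l'. iv l' * (reduced_rep l' x s t * reduced_rep l' y t u)
      * (\<Sum>w\<in>UNIV. reduced_rep l w i j * reduced_rep l' (st w) u s))"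
    by (simp add: sum_swap_inside4 sum_distrib_left)
  also have "\<dots> = (\<Sum>l'\<in>UNIV. \<Sum>s<d l'. \<Sum>t<d l'. \<Sum>u<d l'. iv l' * (reduced_rep l' x s t * reduced_rep l' y t u)
      * (if l = l' \<and> i = s \<and> j = u then \<pi> (normed_schur l') else 0))"
    using assms by (intro sum.cong refl) (simp add: reduced_rep_orthogonality)
  also have "\<dots> = (\<Sum>t<d l. iv l * (reduced_rep l x i t * reduced_rep l y t j) * \<pi> (normed_schur l))"
    using assms by (simp add: if_conj_zero sum_if_zero)
  also have "\<dots> = (\<Sum>k<d l. reduced_rep l x i k * reduced_rep l y k j)"
    using res_normed_schur_nonzero[of l] by (simp add: iv_def field_simps)
  finally show ?thesis .
qed

definition matrix_unit_J :: "'l \<Rightarrow> nat \<Rightarrow> nat \<Rightarrow> 'b \<Rightarrow> 'f" where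
  "matrix_unit_J l i j = (\<lambda>w. inverse (\<pi> (normed_schur l)) * reduced_rep l (st w) j i)"

lemma repv_matrix_unit_J:
  assumes "i < d l" "j < d l" "k < d l'" "p < d l'"
  shows "repv (reduced_rep l') (matrix_unit_J l i j) k p = (if l' = l \<and> k = i \<and> p = j then 1 else 0)"
proof -
  have "repv (reduced_rep l') (matrix_unit_J l i j) k p
      = inverse (\<pi> (normed_schur l)) * (\<Sum>b\<in>UNIV. reduced_rep l' b k p * reduced_rep l (st b) j i)"
    unfolding repv_def matrix_unit_J_def by (simp add: sum_distrib_left mult_ac)
  then show ?thesis using assms res_normed_schur_nonzero by (simp add: reduced_rep_orthogonality)
qed

lemma fourier_inversion_J:
  "u x = (\<Sum>l\<in>UNIV. inverse (\<pi> (normed_schur l)) *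
     (\<Sum>i<d l. \<Sum>j<d l. repv (reduced_rep l) u i j * reduced_rep l (st x) j i))"
proof -
  have "(\<Sum>l\<in>UNIV. inverse (\<pi> (normed_schur l)) * (\<Sum>i<d l. \<Sum>j<d l. repv (reduced_rep l) u i j * reduced_rep l (st x) j i))
      = (\<Sum>w\<in>UNIV. \<Sum>l\<in>UNIV. \<Sum>i<d l. \<Sum>j<d l.
           u w * (inverse (\<pi> (normed_schur l)) * (reduced_rep l w i j * reduced_rep l (st x) j i)))"
    unfolding repv_def by (simp add: sum_distrib_left sum_distrib_right mult_ac sum_swap_inside3)
  also have "\<dots> = (\<Sum>w\<in>UNIV. u w * (\<Sum>l\<in>UNIV. inverse (\<pi> (normed_schur l)) *
      (\<Sum>i<d l. \<Sum>j<d l. reduced_rep l w i j * reduced_rep l (st x) j i)))"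
    by (simp add: sum_distrib_left)
  also have "\<dots> = u x" by (simp add: reduced_rep_completeness)
  finally show ?thesis by simp
qed

sublocale J: split_semisimple MJ d reduced_rep matrix_unit_J "\<lambda>l. inverse (\<pi> (normed_schur l))" st
proof
  fix i j l u v assume "i < d l" "j < d l"
  then show "repv (reduced_rep l) (sprod MJ u v) i j = (\<Sum>k<d l. repv (reduced_rep l) u i k * repv (reduced_rep l) v k j)"
    by (intro repv_sprod_of_basis multJ_repv_basis)
qed (simp_all add: repv_matrix_unit_J fourier_inversion_J[symmetric] res_normed_schur_nonzero)

section \<open>Comparison of cells\<close>

lemma sum_reduced_rep_mult:
  assumes "k < d l" "i < d l"
  shows "(\<Sum>j<d l. reduced_rep l v k j * reduced_rep l w j i)
      = \<pi> (vpow_a l * vpow_a l * (\<Sum>j<d l. rho l v k j * rho l w j i))"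
proof -
  have "(\<Sum>j<d l. reduced_rep l v k j * reduced_rep l w j i) = (\<Sum>j<d l. \<pi> (scaled_rho l v k j * scaled_rho l w j i))"
    using assms by (simp add: reduced_rep_mult)
  also have "\<dots> = \<pi> (\<Sum>j<d l. scaled_rho l v k j * scaled_rho l w j i)"
    using assms by (subst res_sum) (auto intro!: val_ring_mult scaled_rho_in_val_ring)
  finally show ?thesis unfolding scaled_rho_def by (simp add: sum_distrib_left mult_ac)
qed

lemma reduced_rep_nonzero: "reduced_rep l v i j \<noteq> 0 \<Longrightarrow> rho l v i j \<noteq> 0"
  unfolding reduced_rep_def scaled_rho_def by auto

lemma left_step_multJ_imp: "left_step MJ x y \<Longrightarrow> left_step m x y"
  unfolding J.left_step_iff H.left_step_iff using sum_reduced_rep_mult by fastforce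

lemma right_step_multJ_imp: "right_step MJ x y \<Longrightarrow> right_step m x y"
  unfolding J.right_step_iff H.right_step_iff
  using sum_reduced_rep_mult by (fastforce simp: mult.commute[of "reduced_rep _ y _ _"] mult.commute[of "rho _ y _ _"])

lemma lr_step_multJ_imp: "lr_step MJ x y \<Longrightarrow> lr_step m x y"
  unfolding J.lr_step_iff H.lr_step_iff using reduced_rep_nonzero by blast

lemma left_cell_multJ_imp: "left_cell_equiv MJ x y \<Longrightarrow> left_cell_equiv m x y"
  unfolding left_cell_equiv_def by (erule cell_equiv_mono) (rule left_step_multJ_imp)

lemma right_cell_multJ_imp: "right_cell_equiv MJ x y \<Longrightarrow> right_cell_equiv m x y"
  unfolding right_cell_equiv_def by (erule cell_equiv_mono) (rule right_step_multJ_imp)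

lemma lr_cell_multJ_imp: "lr_cell_equiv MJ x y \<Longrightarrow> lr_cell_equiv m x y"
  unfolding lr_cell_equiv_def by (erule cell_equiv_mono) (rule lr_step_multJ_imp)

lemma lr_cell_multJ_star: "lr_cell_equiv MJ x (st x)"
proof -
  have "\<exists>l i j. i < d l \<and> j < d l \<and> reduced_rep l x i j \<noteq> 0 \<and> reduced_rep l (st x) j i \<noteq> 0"
  proof (rule ccontr)
    assume "\<not> ?thesis"
    then have "(\<Sum>l\<in>UNIV. inverse (\<pi> (normed_schur l)) *
        (\<Sum>i<d l. \<Sum>j<d l. reduced_rep l x i j * reduced_rep l (st x) j i)) = 0"
      by (auto intro!: sum.neutral)
    then show False using reduced_rep_completeness[of x x] by simp
  qed
  then have "lr_step MJ x (st x)" "lr_step MJ (st x) x"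
    unfolding J.lr_step_iff st_st by blast+
  then show ?thesis unfolding lr_cell_equiv_def by (simp add: cell_equiv_of_steps)
qed

end

theorem mainTheorem10:
  fixes \<nu> :: "'k::field \<Rightarrow> 'g::linordered_ab_group_add"
    and \<pi> :: "'k \<Rightarrow> 'f::field"
    and m :: "'b::finite \<Rightarrow> 'b \<Rightarrow> 'b \<Rightarrow> 'k"
    and st :: "'b \<Rightarrow> 'b"
    and tau :: "'b \<Rightarrow> 'k"
    and d :: "'l::finite \<Rightarrow> nat"
    and rho :: "'l \<Rightarrow> 'b \<Rightarrow> nat \<Rightarrow> nat \<Rightarrow> 'k"
    and c :: "'l \<Rightarrow> 'k"
    and a :: "'l \<Rightarrow> 'g"
    and vp :: "'g \<Rightarrow> 'k"
  assumes val: "valuation \<nu>"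
    and res: "residue_map \<nu> \<pi>"
    and freal: "formally_real TYPE('f)"
    and alg: "is_assoc_unital m"
    and st_inv: "\<And>b. st (st b) = b"
    and st_anti: "\<And>b b' e. m b b' e = m (st b') (st b) (st e)"
    and tau_sym: "\<And>u v. tauH tau (sprod m u v) = tauH tau (sprod m v u)"
    and B_dual: "\<And>b b'. tauH tau (sprod m (bvec b) (bvec (st b'))) = (if b = b' then 1 else 0)"
    and reps: "\<And>l. is_rep m (d l) (rho l)"
    and wed: "wedderburn d rho"
    and schur_nz: "\<And>l. c l \<noteq> 0"
    and schur: "\<And>b. tau b = (\<Sum>l\<in>UNIV. inverse (c l) * (\<Sum>i<d l. rho l b i i))"
    and a_def: "\<And>l. a l + a l = - \<nu> (c l)"
    and vp_hom: "\<And>x y. x \<in> gen_subgroup (range a) \<Longrightarrow> y \<in> gen_subgroup (range a) \<Longrightarrow>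
                   vp (x + y) = vp x * vp y"
    and vp_val: "\<And>x. x \<in> gen_subgroup (range a) \<Longrightarrow> vp x \<noteq> 0 \<and> \<nu> (vp x) = x"
    and balanced: "\<And>l S s i j. star_sym_basis m tau st S \<Longrightarrow> s \<in> S \<Longrightarrow> i < d l \<Longrightarrow> j < d l \<Longrightarrow>
                   repv (rho l) s i j = 0 \<or> - a l \<le> \<nu> (repv (rho l) s i j)"
  shows "\<forall>x y z.
    (gammaJ vp \<pi> a c d rho x y z \<noteq> 0 \<longrightarrow>
       left_cell_equiv (multJ vp \<pi> a c d rho st) x (st y) \<and>
       left_cell_equiv (multJ vp \<pi> a c d rho st) y (st z) \<and>
       left_cell_equiv (multJ vp \<pi> a c d rho st) z (st x)) \<and>
    (left_cell_equiv (multJ vp \<pi> a c d rho st) x y \<longrightarrow> left_cell_equiv m x y) \<and>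
    (right_cell_equiv (multJ vp \<pi> a c d rho st) x y \<longrightarrow> right_cell_equiv m x y) \<and>
    (lr_cell_equiv (multJ vp \<pi> a c d rho st) x y \<longrightarrow> lr_cell_equiv m x y) \<and>
    lr_cell_equiv (multJ vp \<pi> a c d rho st) x (st x)"
proof -
  interpret asymptotic_algebra \<nu> \<pi> m st tau d rho c a vp
    by (intro asymptotic_algebra.intro residue_valuation.intro asymptotic_algebra_axioms.intro) fact+
  show ?thesis
    using left_cells_multJ_of_gammaJ left_cell_multJ_imp right_cell_multJ_imp lr_cell_multJ_imp
      lr_cell_multJ_star
    by blast
qed

end
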